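(* Let $(G,\omega)$ be a weighted graph of genus $g=g(G,\omega)$. Then: (1) for every $D\in\operatorname{Div}(G,\omega)$, $r_{(G,\omega)}(D)-r_{(G,\omega)}(K_{(G,\omega)}-D)=\deg D-g+1$; (2) for every $D,D'\in\operatorname{Div}(G)$ with $D\sim D'$ (linear equivalence on $G$), $r_{(G,\omega)}(D)=r_{(G,\omega)}(D')$.
   Context: Graphs are finite and connected, loops and multiple edges allowed. $\operatorname{Div}(G)$ is the free abelian group on $V(G)$. Define $(v\cdot w)$ as the number of edges joining $v,w$ if $v\ne w$, and $(v\cdot v)=-\operatorname{val}(v)+2\operatorname{loop}(v)$ (valency with loops counted twice). $T_v=\sum_w(v\cdot w)w$, $\operatorname{Prin}(G)$ is generated by the $T_v$, $D\sim D'$ iff $D-D'\in\operatorname{Prin}(G)$. The rank $r_G(D)$ is $-1$ if no effective divisor is equivalent to $D$, and otherwise the maximum $k\ge0$ such that for every effective $E$ of degree $k$ some effective divisor is equivalent to $D-E$. For a graph $H$ with loops, $\widehat H$ is obtained by inserting one new vertex in each loop-edge, and $r^{\#}_H(D):=r_{\widehat H}(D)$ (divisor extended by zero). A weighted graph is a pair $(G,\omega)$ with $\omega:V(G)\to\mathbb{Z}_{\ge0}$; its genus is $g(G,\omega)=b_1(G)+\sum_v\omega(v)$, where $b_1(G)=|E|-|V|+1$. The virtual graph $G^\omega$ is obtained from $G$ by attaching $\omega(v)$ new loops at each vertex $v$; $V(G^\omega)=V(G)$ and $\operatorname{Div}(G,\omega):=\operatorname{Div}(G^\omega)=\operatorname{Div}(G)$.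 Set $K_{(G,\omega)}=\sum_{v}(\operatorname{val}_{G^\omega}(v)-2)v$ and $r_{(G,\omega)}(D):=r^{\#}_{G^\omega}(D)$. *)

theory Defs
  imports Main
begin

text \<open>A finite connected multigraph (loops and multiple edges allowed) is given by a
vertex set V and a symmetric edge-multiplicity function m; m v v is the number of
loops at v.\<close>

definition multigraph :: "'a set \<Rightarrow> ('a \<Rightarrow> 'a \<Rightarrow> nat) \<Rightarrow> bool" where
  "multigraph V m \<longleftrightarrow> finite V \<and> V \<noteq> {} \<and> (\<forall>v w. m v w = m w v)
     \<and> (\<forall>v w. 0 < m v w \<longrightarrow> v \<in> V \<and> w \<in> V)
     \<and> (\<forall>v\<in>V. \<forall>w\<in>V. (v, w) \<in> {(x, y). 0 < m x y}\<^sup>*)"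

definition num_edges :: "'a set \<Rightarrow> ('a \<Rightarrow> 'a \<Rightarrow> nat) \<Rightarrow> nat" where
  "num_edges V m = (\<Sum>v\<in>V. m v v) + (\<Sum>v\<in>V. \<Sum>w\<in>V - {v}. m v w) div 2"

definition betti1 :: "'a set \<Rightarrow> ('a \<Rightarrow> 'a \<Rightarrow> nat) \<Rightarrow> int" where
  "betti1 V m = int (num_edges V m) - int (card V) + 1"

definition valency :: "'a set \<Rightarrow> ('a \<Rightarrow> 'a \<Rightarrow> nat) \<Rightarrow> 'a \<Rightarrow> nat" where
  "valency V m v = (\<Sum>w\<in>V - {v}. m v w) + 2 * m v v"

definition inters :: "'a set \<Rightarrow> ('a \<Rightarrow> 'a \<Rightarrow> nat) \<Rightarrow> 'a \<Rightarrow> 'a \<Rightarrow> int" where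
  "inters V m v w = (if v \<noteq> w then int (m v w) else - int (valency V m v) + 2 * int (m v v))"

definition T_div :: "'a set \<Rightarrow> ('a \<Rightarrow> 'a \<Rightarrow> nat) \<Rightarrow> 'a \<Rightarrow> 'a \<Rightarrow> int" where
  "T_div V m v = (\<lambda>w. if w \<in> V then inters V m v w else 0)"

definition is_div :: "'a set \<Rightarrow> ('a \<Rightarrow> int) \<Rightarrow> bool" where
  "is_div V D \<longleftrightarrow> (\<forall>x. x \<notin> V \<longrightarrow> D x = 0)"

definition principal :: "'a set \<Rightarrow> ('a \<Rightarrow> 'a \<Rightarrow> nat) \<Rightarrow> ('a \<Rightarrow> int) \<Rightarrow> bool" where
  "principal V m D \<longleftrightarrow> (\<exists>c :: 'a \<Rightarrow> int. D = (\<lambda>w. \<Sum>v\<in>V. c v * T_div V m v w))"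

definition lin_equiv :: "'a set \<Rightarrow> ('a \<Rightarrow> 'a \<Rightarrow> nat) \<Rightarrow> ('a \<Rightarrow> int) \<Rightarrow> ('a \<Rightarrow> int) \<Rightarrow> bool" where
  "lin_equiv V m D D' \<longleftrightarrow> principal V m (\<lambda>x. D x - D' x)"

definition deg :: "'a set \<Rightarrow> ('a \<Rightarrow> int) \<Rightarrow> int" where
  "deg V D = (\<Sum>v\<in>V. D v)"

definition effective :: "'a set \<Rightarrow> ('a \<Rightarrow> int) \<Rightarrow> bool" where
  "effective V D \<longleftrightarrow> is_div V D \<and> (\<forall>v. 0 \<le> D v)"

definition rank :: "'a set \<Rightarrow> ('a \<Rightarrow> 'a \<Rightarrow> nat) \<Rightarrow> ('a \<Rightarrow> int) \<Rightarrow> int" where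
  "rank V m D =
    (if \<not> (\<exists>E. effective V E \<and> lin_equiv V m D E) then -1
     else int (GREATEST k::nat. \<forall>E. effective V E \<and> deg V E = int k \<longrightarrow>
                 (\<exists>F. effective V F \<and> lin_equiv V m (\<lambda>x. D x - E x) F)))"

text \<open>The graph \<open>\<widehat>H\<close>: one new vertex Inr (v,i) inserted into the i-th loop at v;
the subdivided loop becomes two parallel edges between Inl v and Inr (v,i).\<close>
definition hat_V :: "'a set \<Rightarrow> ('a \<Rightarrow> 'a \<Rightarrow> nat) \<Rightarrow> ('a + ('a \<times> nat)) set" where
  "hat_V V m = Inl ` V \<union> {Inr (v, i) | v i. v \<in> V \<and> i < m v v}"

definition hat_m :: "('a \<Rightarrow> 'a \<Rightarrow> nat) \<Rightarrow> ('a + ('a \<times> nat)) \<Rightarrow> ('a + ('a \<times> nat)) \<Rightarrow> nat" where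
  "hat_m m x y = (case (x, y) of
      (Inl v, Inl w) \<Rightarrow> (if v = w then 0 else m v w)
    | (Inl v, Inr (w, i)) \<Rightarrow> (if v = w \<and> i < m v v then 2 else 0)
    | (Inr (w, i), Inl v) \<Rightarrow> (if v = w \<and> i < m v v then 2 else 0)
    | (Inr _, Inr _) \<Rightarrow> 0)"

definition ext_div :: "('a \<Rightarrow> int) \<Rightarrow> ('a + ('a \<times> nat)) \<Rightarrow> int" where
  "ext_div D = (\<lambda>x. case x of Inl v \<Rightarrow> D v | Inr _ \<Rightarrow> 0)"

definition rank_sharp :: "'a set \<Rightarrow> ('a \<Rightarrow> 'a \<Rightarrow> nat) \<Rightarrow> ('a \<Rightarrow> int) \<Rightarrow> int" where
  "rank_sharp V m D = rank (hat_V V m) (hat_m m) (ext_div D)"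

definition virt_m :: "'a set \<Rightarrow> ('a \<Rightarrow> 'a \<Rightarrow> nat) \<Rightarrow> ('a \<Rightarrow> nat) \<Rightarrow> 'a \<Rightarrow> 'a \<Rightarrow> nat" where
  "virt_m V m \<omega> = (\<lambda>v w. m v w + (if v = w \<and> v \<in> V then \<omega> v else 0))"

definition wgenus :: "'a set \<Rightarrow> ('a \<Rightarrow> 'a \<Rightarrow> nat) \<Rightarrow> ('a \<Rightarrow> nat) \<Rightarrow> int" where
  "wgenus V m \<omega> = betti1 V m + (\<Sum>v\<in>V. int (\<omega> v))"

definition wcanon :: "'a set \<Rightarrow> ('a \<Rightarrow> 'a \<Rightarrow> nat) \<Rightarrow> ('a \<Rightarrow> nat) \<Rightarrow> 'a \<Rightarrow> int" where
  "wcanon V m \<omega> = (\<lambda>v. if v \<in> V then int (valency V (virt_m V m \<omega>) v) - 2 else 0)"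

definition wrank :: "'a set \<Rightarrow> ('a \<Rightarrow> 'a \<Rightarrow> nat) \<Rightarrow> ('a \<Rightarrow> nat) \<Rightarrow> ('a \<Rightarrow> int) \<Rightarrow> int" where
  "wrank V m \<omega> D = rank_sharp V (virt_m V m \<omega>) D"

end

theory Submission
  imports Defs
begin

text \<open>Inserting a vertex into every loop of the virtual graph \<open>G\<^sup>\<omega>\<close> yields a loopless graph \<open>\<widehat>H\<close>
  whose canonical divisor is \<open>K_(G,\<omega>)\<close> extended by zero, of degree \<open>2g - 2\<close>; firing vectors on \<open>G\<close>
  extend to \<open>\<widehat>H\<close> (constant along each subdivided loop), so linear equivalence on \<open>G\<close> persists on \<open>\<widehat>H\<close>.
  Both statements thus reduce to the Baker-Norine theory of loopless graphs. There, an injective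
  ordering \<open>\<pi>\<close> of the vertices gives an acyclic orientation whose divisor \<open>\<nu>_\<pi>\<close> is never equivalent
  to an effective divisor and satisfies \<open>K - \<nu>_\<pi> = \<nu>_{-\<pi>}\<close>; Dhar's burning algorithm applied to a
  \<open>q\<close>-reduced divisor shows that for every \<open>D\<close> either \<open>D\<close> or some \<open>\<nu>_\<pi> - D\<close> is equivalent to an
  effective divisor. Hence \<open>r(D) + 1\<close> is the least \<open>deg\<^sup>+(D' - \<nu>_\<pi>)\<close> over \<open>D' ~ D\<close> and \<open>\<pi>\<close>, and
  \<open>deg\<^sup>+(X) - deg\<^sup>+(-X) = deg X\<close> turns this characterisation into Riemann-Roch.\<close>

lemma sum_below_eq_sum_above:
  fixes f :: "'v \<Rightarrow> 'v \<Rightarrow> 'c::comm_monoid_add" and \<pi> :: "'v \<Rightarrow> 'o::linorder"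
  assumes "finite S" and "\<And>v w. f v w = f w v"
  shows "(\<Sum>v\<in>S. \<Sum>w\<in>{w\<in>S. \<pi> w < \<pi> v}. f v w) = (\<Sum>v\<in>S. \<Sum>w\<in>{w\<in>S. \<pi> v < \<pi> w}. f v w)"
proof -
  have "(\<Sum>v\<in>S. \<Sum>w\<in>{w\<in>S. \<pi> w < \<pi> v}. f v w) = (\<Sum>w\<in>S. \<Sum>v\<in>{v\<in>S. \<pi> w < \<pi> v}. f v w)"
    using sum.swap_restrict[OF assms(1) assms(1), of f "\<lambda>v w. \<pi> w < \<pi> v"] by simp
  then show ?thesis
    using assms(2) by simp
qed

lemma sum_remove_split_by_order:
  fixes f :: "'v \<Rightarrow> 'c::comm_monoid_add" and \<pi> :: "'v \<Rightarrow> 'o::linorder"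
  assumes "finite S" "inj_on \<pi> S" "v \<in> S"
  shows "(\<Sum>w\<in>S - {v}. f w) = (\<Sum>w\<in>{w\<in>S. \<pi> w < \<pi> v}. f w) + (\<Sum>w\<in>{w\<in>S. \<pi> v < \<pi> w}. f w)"
proof -
  have split: "S - {v} = {w\<in>S. \<pi> w < \<pi> v} \<union> {w\<in>S. \<pi> v < \<pi> w}"
    using assms(2,3) by (auto simp: inj_on_def; metis linorder_neqE)
  show ?thesis
    unfolding split by (rule sum.union_disjoint) (use assms(1) in auto)
qed

lemma sum_off_diagonal_eq_twice_below:
  fixes f :: "'v \<Rightarrow> 'v \<Rightarrow> 'c::comm_semiring_1" and \<pi> :: "'v \<Rightarrow> 'o::linorder"
  assumes "finite S" "\<And>v w. f v w = f w v" "inj_on \<pi> S"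
  shows "(\<Sum>v\<in>S. \<Sum>w\<in>S - {v}. f v w) = 2 * (\<Sum>v\<in>S. \<Sum>w\<in>{w\<in>S. \<pi> w < \<pi> v}. f v w)"
proof -
  have "(\<Sum>v\<in>S. \<Sum>w\<in>S - {v}. f v w)
      = (\<Sum>v\<in>S. (\<Sum>w\<in>{w\<in>S. \<pi> w < \<pi> v}. f v w) + (\<Sum>w\<in>{w\<in>S. \<pi> v < \<pi> w}. f v w))"
    by (rule sum.cong[OF refl]) (rule sum_remove_split_by_order[OF assms(1,3)])
  also have "\<dots> = (\<Sum>v\<in>S. \<Sum>w\<in>{w\<in>S. \<pi> w < \<pi> v}. f v w) + (\<Sum>v\<in>S. \<Sum>w\<in>{w\<in>S. \<pi> v < \<pi> w}. f v w)"
    by (rule sum.distrib)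
  also have "(\<Sum>v\<in>S. \<Sum>w\<in>{w\<in>S. \<pi> v < \<pi> w}. f v w) = (\<Sum>v\<in>S. \<Sum>w\<in>{w\<in>S. \<pi> w < \<pi> v}. f v w)"
    by (rule sum_below_eq_sum_above[symmetric, OF assms(1)]) (rule assms(2))
  finally show ?thesis
    by (simp add: mult_2)
qed

lemma finite_imp_inj_on_int: "finite S \<Longrightarrow> \<exists>\<pi> :: 'v \<Rightarrow> int. inj_on \<pi> S"
  by (metis finite_imp_inj_to_nat_seg inj_on_of_nat comp_inj_on)

lemma finite_funs_bounded_support:
  assumes "finite A" "finite B"
  shows "finite {f :: 'v \<Rightarrow> 'b. (\<forall>x. x \<notin> A \<longrightarrow> f x = d) \<and> (\<forall>x\<in>A. f x \<in> B)}"
  using finite_set_of_finite_funs[OF assms, of d] by (rule rev_finite_subset) auto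

lemma finite_ex_min_on:
  fixes f :: "'a \<Rightarrow> 'b::linorder"
  assumes "finite S" "S \<noteq> {}"
  shows "\<exists>x\<in>S. \<forall>y\<in>S. f x \<le> f y"
  using ex_is_arg_min_if_finite[OF assms, of f] by (auto simp: is_arg_min_def not_less)

definition prin_div :: "'v set \<Rightarrow> ('v \<Rightarrow> 'v \<Rightarrow> nat) \<Rightarrow> ('v \<Rightarrow> int) \<Rightarrow> 'v \<Rightarrow> int" where
  "prin_div V m c = (\<lambda>w. \<Sum>v\<in>V. c v * T_div V m v w)"

lemma principal_iff_prin_div: "principal V m D \<longleftrightarrow> (\<exists>c. D = prin_div V m c)"
  by (simp add: principal_def prin_div_def)

lemma lin_equiv_iff_prin_div: "lin_equiv V m D D' \<longleftrightarrow> (\<exists>c. \<forall>x. D x - D' x = prin_div V m c x)"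
  unfolding lin_equiv_def principal_iff_prin_div by (auto simp: fun_eq_iff)

lemma prin_div_outside: "w \<notin> V \<Longrightarrow> prin_div V m c w = 0"
  by (simp add: prin_div_def T_div_def)

text \<open>The loops at \<open>w\<close> cancel in \<open>inters V m w w\<close>, so loops never contribute to
  principal divisors.\<close>

lemma prin_div_eq:
  assumes "finite V" "\<And>v w. m v w = m w v" "w \<in> V"
  shows "prin_div V m c w = (\<Sum>v\<in>V. int (m v w) * (c v - c w))"
proof -
  have "(\<Sum>v\<in>V - {w}. m w v) = (\<Sum>v\<in>V - {w}. m v w)"
    by (rule sum.cong[OF refl]) (rule assms(2))
  then have diag: "inters V m w w = - (\<Sum>v\<in>V - {w}. int (m v w))"
    by (simp add: inters_def valency_def)
  have off: "\<And>v. v \<in> V - {w} \<Longrightarrow> inters V m v w = int (m v w)"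
    by (simp add: inters_def)
  have "prin_div V m c w = c w * inters V m w w + (\<Sum>v\<in>V - {w}. c v * inters V m v w)"
    unfolding prin_div_def T_div_def using assms(1,3) by (simp add: sum.remove)
  also have "\<dots> = - c w * (\<Sum>v\<in>V - {w}. int (m v w)) + (\<Sum>v\<in>V - {w}. c v * int (m v w))"
    by (simp add: diag off)
  also have "\<dots> = (\<Sum>v\<in>V - {w}. int (m v w) * (c v - c w))"
    by (simp add: sum_distrib_left sum_subtractf algebra_simps sum_negf)
  also have "\<dots> = (\<Sum>v\<in>V. int (m v w) * (c v - c w))"
    using assms(1,3) by (simp add: sum.remove)
  finally show ?thesis .
qed

lemma prin_div_cong: "(\<And>x. x \<in> V \<Longrightarrow> c x = c' x) \<Longrightarrow> prin_div V m c = prin_div V m c'"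
  unfolding prin_div_def by (intro ext sum.cong) auto

lemma prin_div_add: "prin_div V m (\<lambda>x. a x + b x) w = prin_div V m a w + prin_div V m b w"
  unfolding prin_div_def by (simp add: sum.distrib algebra_simps)

lemma prin_div_diff: "prin_div V m (\<lambda>x. a x - b x) w = prin_div V m a w - prin_div V m b w"
  unfolding prin_div_def by (simp add: sum_subtractf algebra_simps)

lemma prin_div_uminus: "prin_div V m (\<lambda>x. - a x) w = - prin_div V m a w"
  unfolding prin_div_def by (simp add: sum_negf)

locale connected_multigraph =
  fixes W :: "'v set" and mm :: "'v \<Rightarrow> 'v \<Rightarrow> nat"
  assumes multigraph: "multigraph W mm"
begin

lemma finite_W: "finite W"
  using multigraph by (simp add: multigraph_def)

lemma W_nonempty: "W \<noteq> {}"
  using multigraph by (simp add: multigraph_def)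

lemma mm_sym: "mm v w = mm w v"
  using multigraph by (simp add: multigraph_def)

lemma mm_pos_imp_vertices: "0 < mm v w \<Longrightarrow> v \<in> W \<and> w \<in> W"
  using multigraph unfolding multigraph_def by blast

lemma exists_edge_leaving:
  assumes "A \<subseteq> W" "A \<noteq> {}" "A \<noteq> W"
  shows "\<exists>a\<in>A. \<exists>b\<in>W - A. 0 < mm a b"
proof -
  obtain a b where a: "a \<in> A" and b: "b \<in> W" "b \<notin> A"
    using assms by blast
  have "(a, b) \<in> {(x, y). 0 < mm x y}\<^sup>*"
    using multigraph a b assms(1) by (auto simp: multigraph_def)
  then show ?thesis
    using b(2)
  proof (induction rule: rtrancl_induct)
    case base
    then show ?case using a by simp
  next
    case (step y z)
    show ?case
    proof (cases "y \<in> A")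
      case True
      have "0 < mm y z"
        using step.hyps(2) by simp
      then show ?thesis
        using True step.prems mm_pos_imp_vertices by blast
    next
      case False
      then show ?thesis using step.IH by blast
    qed
  qed
qed

lemmas prin_div_eq' = prin_div_eq[OF finite_W mm_sym]

lemma prin_div_const: "prin_div W mm (\<lambda>x. k) w = 0"
  by (cases "w \<in> W") (simp_all add: prin_div_eq' prin_div_outside)

lemma lin_equiv_refl: "lin_equiv W mm D D"
  unfolding lin_equiv_iff_prin_div by (rule exI[of _ "\<lambda>_. 0"]) (simp add: prin_div_const)

lemma lin_equiv_sym: "lin_equiv W mm D D' \<Longrightarrow> lin_equiv W mm D' D"
  unfolding lin_equiv_iff_prin_div
proof (elim exE)
  fix c
  assume c: "\<forall>x. D x - D' x = prin_div W mm c x"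
  have "\<forall>x. D' x - D x = prin_div W mm (\<lambda>x. - c x) x"
    using c by (simp add: prin_div_uminus) (metis minus_diff_eq)
  then show "\<exists>c. \<forall>x. D' x - D x = prin_div W mm c x" by blast
qed

lemma lin_equiv_trans: "lin_equiv W mm D D' \<Longrightarrow> lin_equiv W mm D' D'' \<Longrightarrow> lin_equiv W mm D D''"
  unfolding lin_equiv_iff_prin_div
proof (elim exE)
  fix c c'
  assume c: "\<forall>x. D x - D' x = prin_div W mm c x" and c': "\<forall>x. D' x - D'' x = prin_div W mm c' x"
  have "\<forall>x. D x - D'' x = prin_div W mm (\<lambda>x. c x + c' x) x"
  proof
    fix x
    show "D x - D'' x = prin_div W mm (\<lambda>x. c x + c' x) x"
      using c[rule_format, of x] c'[rule_format, of x] by (simp add: prin_div_add)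
  qed
  then show "\<exists>c. \<forall>x. D x - D'' x = prin_div W mm c x" by blast
qed

lemma lin_equiv_diff_right: "lin_equiv W mm D D' \<Longrightarrow> lin_equiv W mm (\<lambda>x. D x - E x) (\<lambda>x. D' x - E x)"
  unfolding lin_equiv_iff_prin_div by simp

lemma lin_equiv_diff_left: "lin_equiv W mm D D' \<Longrightarrow> lin_equiv W mm (\<lambda>x. A x - D' x) (\<lambda>x. A x - D x)"
  unfolding lin_equiv_iff_prin_div by simp

lemma lin_equiv_is_div: "lin_equiv W mm D D' \<Longrightarrow> is_div W D \<Longrightarrow> is_div W D'"
  unfolding lin_equiv_iff_prin_div is_div_def by (metis prin_div_outside eq_iff_diff_eq_0)

lemma deg_diff: "deg W (\<lambda>x. D x - E x) = deg W D - deg W E"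
  by (simp add: deg_def sum_subtractf)

lemma deg_add: "deg W (\<lambda>x. D x + E x) = deg W D + deg W E"
  by (simp add: deg_def sum.distrib)

lemma deg_prin_div: "deg W (prin_div W mm c) = 0"
proof -
  have "deg W (prin_div W mm c) = (\<Sum>w\<in>W. \<Sum>v\<in>W. int (mm v w) * c v) - (\<Sum>w\<in>W. \<Sum>v\<in>W. int (mm v w) * c w)"
    unfolding deg_def by (simp add: prin_div_eq' algebra_simps sum_subtractf)
  also have "(\<Sum>w\<in>W. \<Sum>v\<in>W. int (mm v w) * c v) = (\<Sum>v\<in>W. \<Sum>w\<in>W. int (mm v w) * c v)"
    by (rule sum.swap)
  also have "\<dots> = (\<Sum>w\<in>W. \<Sum>v\<in>W. int (mm v w) * c w)"
    by (simp add: mm_sym)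
  finally show ?thesis by simp
qed

lemma lin_equiv_deg: "lin_equiv W mm D D' \<Longrightarrow> deg W D = deg W D'"
proof -
  assume "lin_equiv W mm D D'"
  then obtain c where "(\<lambda>x. D x - D' x) = prin_div W mm c"
    by (auto simp: lin_equiv_iff_prin_div)
  then have "deg W (\<lambda>x. D x - D' x) = 0"
    by (simp add: deg_prin_div)
  then show ?thesis
    by (simp add: deg_diff)
qed

end

text \<open>An injective \<open>\<pi>\<close> orders the vertices; orienting every edge towards its later endpoint gives
  an acyclic orientation, and \<open>orient_div V m \<pi>\<close> is Baker-Norine's divisor \<open>\<nu>\<close> of it
  (indegree minus one).\<close>

definition orient_div :: "'v set \<Rightarrow> ('v \<Rightarrow> 'v \<Rightarrow> nat) \<Rightarrow> ('v \<Rightarrow> int) \<Rightarrow> 'v \<Rightarrow> int" where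
  "orient_div V m \<pi> v = (if v \<in> V then (\<Sum>w\<in>{w\<in>V. \<pi> w < \<pi> v}. int (m v w)) - 1 else 0)"

definition canon_div :: "'v set \<Rightarrow> ('v \<Rightarrow> 'v \<Rightarrow> nat) \<Rightarrow> 'v \<Rightarrow> int" where
  "canon_div V m v = (if v \<in> V then int (valency V m v) - 2 else 0)"

lemma is_div_orient_div: "is_div V (orient_div V m \<pi>)"
  by (simp add: is_div_def orient_div_def)

lemma is_div_canon_div: "is_div V (canon_div V m)"
  by (simp add: is_div_def canon_div_def)

text \<open>Dhar's criterion: no nonempty set of vertices avoiding \<open>q\<close> can fire without some vertex
  going into debt.\<close>

definition q_reduced :: "'v set \<Rightarrow> ('v \<Rightarrow> 'v \<Rightarrow> nat) \<Rightarrow> 'v \<Rightarrow> ('v \<Rightarrow> int) \<Rightarrow> bool" where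
  "q_reduced V m q D \<longleftrightarrow> (\<forall>v\<in>V - {q}. 0 \<le> D v) \<and>
     (\<forall>B. q \<in> B \<longrightarrow> B \<subseteq> V \<longrightarrow> B \<noteq> V \<longrightarrow> (\<exists>v\<in>V - B. D v < (\<Sum>w\<in>B. int (m v w))))"

context connected_multigraph
begin

lemma prin_div_mult: "prin_div W mm (\<lambda>x. k * c x) w = k * prin_div W mm c w"
  unfolding prin_div_def by (simp add: sum_distrib_left mult.assoc)

lemma prin_div_indicator:
  assumes "w \<in> W"
  shows "prin_div W mm (\<lambda>x. if x \<in> U then 1 else 0) w =
    (if w \<in> U then - (\<Sum>v\<in>W - U. int (mm v w)) else (\<Sum>v\<in>W \<inter> U. int (mm v w)))"
proof (cases "w \<in> U")
  case True
  have "prin_div W mm (\<lambda>x. if x \<in> U then 1 else 0) w = (\<Sum>v\<in>W. if v \<in> U then 0 else - int (mm v w))"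
    using assms True by (simp add: prin_div_eq') (rule sum.cong; simp)
  then show ?thesis
    using True by (simp add: sum.If_cases[OF finite_W] Diff_eq sum_negf)
next
  case False
  have "prin_div W mm (\<lambda>x. if x \<in> U then 1 else 0) w = (\<Sum>v\<in>W. if v \<in> U then int (mm v w) else 0)"
    using assms False by (simp add: prin_div_eq') (rule sum.cong; simp)
  then show ?thesis
    using False by (simp add: sum.If_cases[OF finite_W])
qed

lemma sum_edges_to_higher_le_prin_div:
  assumes "w \<in> W" and min: "\<And>x. x \<in> W \<Longrightarrow> c w \<le> c x"
  shows "(\<Sum>v\<in>{v\<in>W. c w < c v}. int (mm v w)) \<le> prin_div W mm c w"
proof -
  have "(\<Sum>v\<in>{v\<in>W. c w < c v}. int (mm v w)) \<le> (\<Sum>v\<in>{v\<in>W. c w < c v}. int (mm v w) * (c v - c w))"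
  proof (rule sum_mono)
    fix v
    assume "v \<in> {v\<in>W. c w < c v}"
    then have "1 \<le> c v - c w"
      by simp
    then show "int (mm v w) \<le> int (mm v w) * (c v - c w)"
      by (metis mult.right_neutral mult_left_mono of_nat_0_le_iff)
  qed
  also have "\<dots> \<le> (\<Sum>v\<in>W. int (mm v w) * (c v - c w))"
    by (rule sum_mono2[OF finite_W]) (auto simp: min)
  also have "\<dots> = prin_div W mm c w"
    using assms(1) by (simp add: prin_div_eq')
  finally show ?thesis .
qed

lemma prin_div_zero_imp_const:
  assumes zero: "\<And>w. w \<in> W \<Longrightarrow> prin_div W mm c w = 0" and "v \<in> W" "w \<in> W"
  shows "c v = c w"
proof -
  define A where "A = {v\<in>W. \<forall>x\<in>W. c v \<le> c x}"
  have "A \<noteq> {}"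
    using finite_ex_min_on[OF finite_W W_nonempty, of c] by (auto simp: A_def)
  have "A = W"
  proof (rule ccontr)
    assume "A \<noteq> W"
    then obtain a b where ab: "a \<in> A" "b \<in> W - A" "0 < mm a b"
      using exists_edge_leaving[OF _ \<open>A \<noteq> {}\<close>] by (auto simp: A_def)
    then have "c a < c b"
      by (auto simp: A_def)
    then have "int (mm b a) \<le> (\<Sum>v\<in>{v\<in>W. c a < c v}. int (mm v a))"
      using ab finite_W by (intro member_le_sum) auto
    also have "\<dots> \<le> prin_div W mm c a"
      using ab(1) by (intro sum_edges_to_higher_le_prin_div) (auto simp: A_def)
    finally show False
      using ab zero[of a] mm_sym[of a b] by (simp add: A_def)
  qed
  then show ?thesis
    using assms(2,3) by (auto simp: A_def intro: order.antisym)
qed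

lemma orient_div_not_lin_equiv_effective:
  "\<not> (effective W E \<and> lin_equiv W mm (orient_div W mm \<pi>) E)"
proof
  assume "effective W E \<and> lin_equiv W mm (orient_div W mm \<pi>) E"
  then obtain c where E: "effective W E" and c: "\<And>x. orient_div W mm \<pi> x - E x = prin_div W mm c x"
    by (auto simp: lin_equiv_iff_prin_div)
  define A where "A = {v\<in>W. \<forall>x\<in>W. c v \<le> c x}"
  have "A \<noteq> {}"
    using finite_ex_min_on[OF finite_W W_nonempty, of c] by (auto simp: A_def)
  then obtain w where w: "w \<in> A" and first: "\<And>x. x \<in> A \<Longrightarrow> \<pi> w \<le> \<pi> x"
    using finite_ex_min_on[of A \<pi>] finite_W by (auto simp: A_def)
  then have "w \<in> W" and min: "\<And>x. x \<in> W \<Longrightarrow> c w \<le> c x"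
    by (auto simp: A_def)
  have "c w < c v" if v: "v \<in> W" and earlier: "\<pi> v < \<pi> w" for v
  proof -
    have "v \<notin> A"
      using first earlier by force
    then obtain x where "x \<in> W" "c x < c v"
      using v by (auto simp: A_def not_le)
    then show ?thesis
      using min by force
  qed
  then have "{v\<in>W. \<pi> v < \<pi> w} \<subseteq> {v\<in>W. c w < c v}"
    by blast
  have "(\<Sum>v\<in>{v\<in>W. \<pi> v < \<pi> w}. int (mm w v)) = (\<Sum>v\<in>{v\<in>W. \<pi> v < \<pi> w}. int (mm v w))"
    by (simp add: mm_sym)
  also have "\<dots> \<le> (\<Sum>v\<in>{v\<in>W. c w < c v}. int (mm v w))"
    by (rule sum_mono2) (use \<open>{v\<in>W. \<pi> v < \<pi> w} \<subseteq> _\<close> finite_W in auto)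
  also have "\<dots> \<le> prin_div W mm c w"
    using \<open>w \<in> W\<close> min by (rule sum_edges_to_higher_le_prin_div)
  finally have "orient_div W mm \<pi> w < prin_div W mm c w"
    using \<open>w \<in> W\<close> by (simp add: orient_div_def)
  moreover have "0 \<le> E w"
    using E by (simp add: effective_def)
  ultimately show False
    using c[of w] by linarith
qed

lemma exists_lin_equiv_nonneg_outside:
  assumes "S \<subseteq> W" "S \<noteq> {}"
  shows "\<exists>D'. lin_equiv W mm D D' \<and> (\<forall>v\<in>W - S. 0 \<le> D' v)"
  using assms
proof (induction "card (W - S)" arbitrary: S)
  case 0
  then show ?case
    using finite_W lin_equiv_refl by auto
next
  case (Suc n)
  then have "S \<noteq> W"
    by auto
  then obtain a b where ab: "a \<in> S" "b \<in> W - S" "0 < mm a b"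
    using exists_edge_leaving[OF Suc.prems] by blast
  have "n = card (W - insert b S)"
    using Suc.hyps(2) ab finite_W by (metis Diff_insert card_Diff_singleton diff_Suc_1)
  then obtain D1 where D1: "lin_equiv W mm D D1" "\<forall>v\<in>W - insert b S. 0 \<le> D1 v"
    using Suc.hyps(1)[of "insert b S"] Suc.prems ab by blast
  define k where "k = \<bar>D1 b\<bar>"
  \<comment> \<open>Firing \<open>S\<close> \<open>k\<close> times sends at least \<open>k\<close> chips to \<open>b\<close> and takes none from \<open>W - S\<close>.\<close>
  define D2 where "D2 = (\<lambda>x. D1 x + k * prin_div W mm (\<lambda>x. if x \<in> S then 1 else 0) x)"
  have "lin_equiv W mm D1 D2"
    unfolding lin_equiv_iff_prin_div D2_def
    by (rule exI[of _ "\<lambda>x. - (k * (if x \<in> S then 1 else 0))"]) (simp add: prin_div_uminus prin_div_mult)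
  then have "lin_equiv W mm D D2"
    using D1(1) lin_equiv_trans by blast
  moreover have "0 \<le> D2 v" if v: "v \<in> W - S" for v
  proof -
    have into_v: "prin_div W mm (\<lambda>x. if x \<in> S then 1 else 0) v = (\<Sum>u\<in>W \<inter> S. int (mm u v))"
      using v by (simp add: prin_div_indicator)
    show ?thesis
    proof (cases "v = b")
      case True
      have "int (mm a b) \<le> (\<Sum>u\<in>W \<inter> S. int (mm u b))"
        using ab Suc.prems(1) finite_W by (intro member_le_sum) (auto simp: mm_sym[of a b])
      then have "k \<le> k * (\<Sum>u\<in>W \<inter> S. int (mm u b))"
        using ab(3) by (simp add: k_def mult_le_cancel_left1)
      then show ?thesis
        using True into_v by (simp add: D2_def k_def)
    next
      case False
      have "0 \<le> (\<Sum>u\<in>W \<inter> S. int (mm u v))"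
        by (simp add: sum_nonneg)
      then show ?thesis
        using False v D1(2) into_v by (simp add: D2_def k_def)
    qed
  qed
  ultimately show ?case
    by blast
qed

text \<open>Dhar's burning algorithm: starting from \<open>{q}\<close>, repeatedly burn a vertex with fewer chips
  than edges into the burnt set; \<open>\<pi>\<close> records the order of burning.\<close>

lemma exists_burning_order:
  assumes "q \<in> W"
    and burn: "\<And>B. q \<in> B \<Longrightarrow> B \<subseteq> W \<Longrightarrow> B \<noteq> W \<Longrightarrow> \<exists>v\<in>W - B. D v < (\<Sum>w\<in>B. int (mm v w))"
  shows "\<exists>\<pi> :: 'v \<Rightarrow> int. inj_on \<pi> W \<and> (\<forall>u\<in>W - {q}. D u < (\<Sum>w\<in>{w\<in>W. \<pi> w < \<pi> u}. int (mm u w)))"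
proof -
  have "\<exists>\<pi> :: 'v \<Rightarrow> int. inj_on \<pi> W \<and> (\<forall>u\<in>W - {q}. D u < (\<Sum>w\<in>{w\<in>W. \<pi> w < \<pi> u}. int (mm u w)))"
    if "q \<in> B" "B \<subseteq> W" "inj_on \<pi> B" "\<forall>u\<in>B - {q}. D u < (\<Sum>w\<in>{w\<in>B. \<pi> w < \<pi> u}. int (mm u w))"
    for B and \<pi> :: "'v \<Rightarrow> int"
    using that
  proof (induction "card (W - B)" arbitrary: B \<pi>)
    case 0
    then have "B = W"
      using finite_W by auto
    then show ?case
      using "0.prems" by blast
  next
    case (Suc n)
    then have "B \<noteq> W"
      by auto
    then obtain v where v: "v \<in> W - B" "D v < (\<Sum>w\<in>B. int (mm v w))"
      using burn Suc.prems(1,2) by blast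
    have "finite B"
      using Suc.prems(2) finite_W finite_subset by blast
    define \<pi>' where "\<pi>' = \<pi>(v := Max (\<pi> ` B) + 1)"
    have later: "\<pi> x < \<pi>' v" if "x \<in> B" for x
      using that \<open>finite B\<close> by (simp add: \<pi>'_def le_imp_less_Suc)
    have same: "\<pi>' x = \<pi> x" if "x \<in> B" for x
      using that v by (auto simp: \<pi>'_def)
    have "inj_on \<pi>' B"
      using Suc.prems(3) same by (simp add: inj_on_def)
    moreover have "\<pi>' v \<notin> \<pi>' ` B"
      using later same by (metis imageE less_irrefl)
    ultimately have "inj_on \<pi>' (insert v B)"
      by auto
    moreover have "D u < (\<Sum>w\<in>{w\<in>insert v B. \<pi>' w < \<pi>' u}. int (mm u w))" if u: "u \<in> insert v B - {q}" for u
    proof (cases "u = v")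
      case True
      have "{w\<in>insert v B. \<pi>' w < \<pi>' u} = B"
        using True later v unfolding \<pi>'_def by auto
      then show ?thesis
        using True v by simp
    next
      case False
      then have "u \<in> B" "u \<noteq> q"
        using u by auto
      then have "{w\<in>insert v B. \<pi>' w < \<pi>' u} = {w\<in>B. \<pi> w < \<pi> u}"
        using False later[of u] v unfolding \<pi>'_def by auto
      then show ?thesis
        using Suc.prems(4) \<open>u \<in> B\<close> \<open>u \<noteq> q\<close> by simp
    qed
    moreover have "n = card (W - insert v B)"
      using Suc.hyps(2) v finite_W by (metis Diff_insert card_Diff_singleton diff_Suc_1)
    ultimately show ?case
      using Suc.hyps(1)[of "insert v B" \<pi>'] Suc.prems(1,2) v by blast
  qed
  from this[of "{q}" "\<lambda>_. 0"] show ?thesis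
    using assms(1) by simp
qed

lemma lin_equiv_nonneg_outside_bounds:
  assumes "q \<in> W" "lin_equiv W mm D D'" "\<forall>v\<in>W - {q}. 0 \<le> D' v"
  shows "D' q \<le> deg W D" and "\<And>x. x \<in> W - {q} \<Longrightarrow> D' q + D' x \<le> deg W D"
proof -
  have deg: "deg W D = D' q + (\<Sum>v\<in>W - {q}. D' v)"
    using lin_equiv_deg[OF assms(2)] assms(1) finite_W by (simp add: deg_def sum.remove)
  moreover have "0 \<le> (\<Sum>v\<in>W - {q}. D' v)"
    by (rule sum_nonneg) (use assms(3) in auto)
  ultimately show "D' q \<le> deg W D"
    by simp
  fix x
  assume "x \<in> W - {q}"
  then have "D' x \<le> (\<Sum>v\<in>W - {q}. D' v)"
    using assms(3) finite_W by (intro member_le_sum) auto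
  then show "D' q + D' x \<le> deg W D"
    using deg by simp
qed

lemma finite_lin_equiv_nonneg_outside_fixed_at:
  assumes "q \<in> W"
  shows "finite {D'. is_div W D' \<and> lin_equiv W mm D D' \<and> (\<forall>v\<in>W - {q}. 0 \<le> D' v) \<and> D' q = M}"
proof (rule finite_subset)
  show "finite {f. (\<forall>x. x \<notin> W \<longrightarrow> f x = 0) \<and> (\<forall>x\<in>W. f x \<in> {min 0 M..max M (deg W D - M)})}"
    by (rule finite_funs_bounded_support[OF finite_W]) simp
  show "{D'. is_div W D' \<and> lin_equiv W mm D D' \<and> (\<forall>v\<in>W - {q}. 0 \<le> D' v) \<and> D' q = M}
      \<subseteq> {f. (\<forall>x. x \<notin> W \<longrightarrow> f x = 0) \<and> (\<forall>x\<in>W. f x \<in> {min 0 M..max M (deg W D - M)})}"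
  proof (safe)
    fix f x
    assume f: "is_div W f" "lin_equiv W mm D f" "\<forall>v\<in>W - {q}. 0 \<le> f v" "M = f q"
    show "x \<notin> W \<Longrightarrow> f x = 0"
      using f(1) by (simp add: is_div_def)
    assume x: "x \<in> W"
    show "f x \<in> {min 0 (f q)..max (f q) (deg W D - f q)}"
    proof (cases "x = q")
      case False
      then have "0 \<le> f x" "f q + f x \<le> deg W D"
        using x f(3) lin_equiv_nonneg_outside_bounds(2)[OF assms f(2,3), of x] by auto
      then show ?thesis
        by (simp add: min_def max_def)
    qed simp
  qed
qed

lemma exists_normalized_potential:
  assumes "q \<in> W" "lin_equiv W mm D D'"
  shows "\<exists>c. (\<forall>x. x \<notin> W \<longrightarrow> c x = 0) \<and> c q = 0 \<and> D' = (\<lambda>x. D x - prin_div W mm c x)"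
proof -
  obtain c where c: "\<And>x. D x - D' x = prin_div W mm c x"
    using assms(2) by (auto simp: lin_equiv_iff_prin_div)
  define c' where "c' = (\<lambda>x. if x \<in> W then c x - c q else 0)"
  have "prin_div W mm c' = prin_div W mm (\<lambda>x. c x - c q)"
    unfolding c'_def by (rule prin_div_cong) simp
  then have "prin_div W mm c' x = prin_div W mm c x" for x
    by (simp add: prin_div_diff prin_div_const)
  then have "D' = (\<lambda>x. D x - prin_div W mm c' x)"
    using c by (simp add: fun_eq_iff algebra_simps)
  then show ?thesis
    using assms(1) by (intro exI[of _ c']) (simp add: c'_def)
qed

lemma finite_normalized_potentials:
  assumes "q \<in> W" "finite F"
  shows "finite {c. (\<forall>x. x \<notin> W \<longrightarrow> c x = 0) \<and> c q = 0 \<and> (\<lambda>x. D x - prin_div W mm c x) \<in> F}"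
    (is "finite ?C")
proof (rule finite_imageD)
  show "finite ((\<lambda>c x. D x - prin_div W mm c x) ` ?C)"
    using assms(2) by (rule finite_subset[rotated]) auto
  show "inj_on (\<lambda>c x. D x - prin_div W mm c x) ?C"
  proof (rule inj_onI)
    fix c c'
    assume c: "c \<in> ?C" and c': "c' \<in> ?C" and eq: "(\<lambda>x. D x - prin_div W mm c x) = (\<lambda>x. D x - prin_div W mm c' x)"
    have "prin_div W mm (\<lambda>x. c x - c' x) w = 0" for w
      using eq by (simp add: prin_div_diff fun_eq_iff)
    then have "c x - c' x = c q - c' q" if "x \<in> W" for x
      using prin_div_zero_imp_const[of "\<lambda>x. c x - c' x"] that assms(1) by blast
    show "c = c'"
    proof
      fix x
      show "c x = c' x"
        using c c' \<open>x \<in> W \<Longrightarrow> c x - c' x = c q - c' q\<close> by (cases "x \<in> W") auto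
    qed
  qed
qed

lemma fire_complement_nonneg:
  assumes "q \<in> B" "B \<subseteq> W" and nonneg: "\<forall>v\<in>W - {q}. 0 \<le> D v"
    and stable: "\<forall>v\<in>W - B. (\<Sum>w\<in>B. int (mm v w)) \<le> D v"
  defines "F \<equiv> prin_div W mm (\<lambda>x. if x \<in> W - B then 1 else 0)"
  shows "\<forall>v\<in>W - {q}. 0 \<le> D v + F v" and "D q \<le> D q + F q"
proof -
  have F_outside: "F v = - (\<Sum>w\<in>B. int (mm v w))" if v: "v \<in> W - B" for v
  proof -
    have "W - (W - B) = B"
      using assms(2) by blast
    then have "F v = - (\<Sum>w\<in>B. int (mm w v))"
      unfolding F_def using v by (subst prin_div_indicator) auto
    then show ?thesis
      by (simp add: mm_sym)
  qed
  have F_inside: "0 \<le> F v" if "v \<in> B" for v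
  proof -
    have "F v = (\<Sum>w\<in>W \<inter> (W - B). int (mm w v))"
      unfolding F_def using that assms(2) by (subst prin_div_indicator) auto
    then show ?thesis
      by (simp add: sum_nonneg)
  qed
  show "\<forall>v\<in>W - {q}. 0 \<le> D v + F v"
  proof
    fix v
    assume v: "v \<in> W - {q}"
    show "0 \<le> D v + F v"
    proof (cases "v \<in> B")
      case True
      then show ?thesis
        using v nonneg F_inside by (simp add: add_nonneg_nonneg)
    next
      case False
      then show ?thesis
        using v stable F_outside by simp
    qed
  qed
  show "D q \<le> D q + F q"
    using F_inside assms(1) by simp
qed

lemma exists_lin_equiv_nonneg_outside_max_at:
  assumes q: "q \<in> W" and D: "is_div W D"
  obtains D2 where "is_div W D2" "lin_equiv W mm D D2" "\<forall>v\<in>W - {q}. 0 \<le> D2 v"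
    and "\<And>D'. is_div W D' \<Longrightarrow> lin_equiv W mm D D' \<Longrightarrow> \<forall>v\<in>W - {q}. 0 \<le> D' v \<Longrightarrow> D' q \<le> D2 q"
proof -
  define S where "S = {D'. is_div W D' \<and> lin_equiv W mm D D' \<and> (\<forall>v\<in>W - {q}. 0 \<le> D' v)}"
  obtain D1 where "lin_equiv W mm D D1" "\<forall>v\<in>W - {q}. 0 \<le> D1 v"
    using exists_lin_equiv_nonneg_outside[of "{q}"] q by auto
  then have "D1 \<in> S"
    using D lin_equiv_is_div by (auto simp: S_def)
  then obtain D2 where D2: "D2 \<in> S" and least: "\<And>D'. D' \<in> S \<Longrightarrow> nat (deg W D - D2 q) \<le> nat (deg W D - D' q)"
    using ex_has_least_nat[of "\<lambda>D'. D' \<in> S" D1 "\<lambda>D'. nat (deg W D - D' q)"] by auto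
  have bounded: "D' q \<le> deg W D" if "D' \<in> S" for D'
    using that lin_equiv_nonneg_outside_bounds(1)[OF q] by (simp add: S_def)
  have max: "D' q \<le> D2 q" if "is_div W D'" "lin_equiv W mm D D'" "\<forall>v\<in>W - {q}. 0 \<le> D' v" for D'
  proof -
    have "D' \<in> S"
      using that by (simp add: S_def)
    then show ?thesis
      using least[of D'] bounded[of D'] bounded[OF D2] by linarith
  qed
  have "is_div W D2" "lin_equiv W mm D D2" "\<forall>v\<in>W - {q}. 0 \<le> D2 v"
    using D2 by (simp_all add: S_def)
  then show ?thesis
    using max by (rule that)
qed

text \<open>Among the divisors equivalent to \<open>D\<close> that are nonnegative off \<open>q\<close>, take one with maximal
  value at \<open>q\<close>, and among those one reached by a normalised firing vector of least total. If some
  set \<open>W - B\<close> could fire without debt, firing it would contradict one of the two choices.\<close>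

lemma exists_lin_equiv_q_reduced:
  assumes q: "q \<in> W" and D: "is_div W D"
  shows "\<exists>D'. lin_equiv W mm D D' \<and> is_div W D' \<and> q_reduced W mm q D'"
proof -
  define S where "S = {D'. is_div W D' \<and> lin_equiv W mm D D' \<and> (\<forall>v\<in>W - {q}. 0 \<le> D' v)}"
  obtain D2 where "is_div W D2" "lin_equiv W mm D D2" "\<forall>v\<in>W - {q}. 0 \<le> D2 v"
    and max_at_q: "\<And>D'. is_div W D' \<Longrightarrow> lin_equiv W mm D D' \<Longrightarrow> \<forall>v\<in>W - {q}. 0 \<le> D' v \<Longrightarrow> D' q \<le> D2 q"
    using exists_lin_equiv_nonneg_outside_max_at[OF q D] by metis
  then have "D2 \<in> S"
    by (simp add: S_def)
  have max: "D' q \<le> D2 q" if "D' \<in> S" for D'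
    using that max_at_q by (simp add: S_def)
  define Cs where "Cs = {c. (\<forall>x. x \<notin> W \<longrightarrow> c x = 0) \<and> c q = 0 \<and> (\<lambda>x. D x - prin_div W mm c x) \<in> {D'\<in>S. D' q = D2 q}}"
  have "finite Cs"
    unfolding Cs_def
    by (rule finite_normalized_potentials[OF q])
      (use finite_lin_equiv_nonneg_outside_fixed_at[OF q, of D "D2 q"] in \<open>simp add: S_def conj_assoc\<close>)
  moreover have "Cs \<noteq> {}"
  proof -
    obtain c where "(\<forall>x. x \<notin> W \<longrightarrow> c x = 0) \<and> c q = 0 \<and> D2 = (\<lambda>x. D x - prin_div W mm c x)"
      using exists_normalized_potential[OF q, of D D2] \<open>D2 \<in> S\<close> by (auto simp: S_def)
    then have "c \<in> Cs"
      using \<open>D2 \<in> S\<close> by (simp add: Cs_def)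
    then show ?thesis
      by blast
  qed
  ultimately obtain c0 where "c0 \<in> Cs" and least: "\<And>c. c \<in> Cs \<Longrightarrow> (\<Sum>v\<in>W. c0 v) \<le> (\<Sum>v\<in>W. c v)"
    using finite_ex_min_on[of Cs "\<lambda>c. \<Sum>v\<in>W. c v"] by blast
  define D' where "D' = (\<lambda>x. D x - prin_div W mm c0 x)"
  have "D' \<in> S" "D' q = D2 q"
    using \<open>c0 \<in> Cs\<close> by (auto simp: Cs_def D'_def)
  have "q_reduced W mm q D'"
    unfolding q_reduced_def
  proof (intro conjI allI impI)
    show nonneg: "\<forall>v\<in>W - {q}. 0 \<le> D' v"
      using \<open>D' \<in> S\<close> by (simp add: S_def)
    fix B
    assume B: "q \<in> B" "B \<subseteq> W" "B \<noteq> W"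
    show "\<exists>v\<in>W - B. D' v < (\<Sum>w\<in>B. int (mm v w))"
    proof (rule ccontr)
      assume "\<not> ?thesis"
      then have stable: "\<forall>v\<in>W - B. (\<Sum>w\<in>B. int (mm v w)) \<le> D' v"
        by (auto simp: not_less)
      define c1 where "c1 = (\<lambda>x. c0 x - (if x \<in> W - B then 1 else 0))"
      have fired: "(\<lambda>x. D x - prin_div W mm c1 x) = (\<lambda>x. D' x + prin_div W mm (\<lambda>x. if x \<in> W - B then 1 else 0) x)"
        by (simp add: c1_def D'_def prin_div_diff fun_eq_iff)
      note fire = fire_complement_nonneg[OF B(1,2) nonneg stable]
      have "lin_equiv W mm D (\<lambda>x. D x - prin_div W mm c1 x)"
        unfolding lin_equiv_iff_prin_div by auto
      then have "(\<lambda>x. D x - prin_div W mm c1 x) \<in> S"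
        using D fire(1) lin_equiv_is_div by (simp add: S_def fired)
      moreover from this have "D q - prin_div W mm c1 q = D2 q"
        using max fire(2) \<open>D' q = D2 q\<close> fired by (metis order.antisym)
      moreover have "(\<forall>x. x \<notin> W \<longrightarrow> c1 x = 0) \<and> c1 q = 0"
        using \<open>c0 \<in> Cs\<close> B(1) by (simp add: Cs_def c1_def)
      ultimately have "c1 \<in> Cs"
        by (simp add: Cs_def)
      have "(\<Sum>v\<in>W. (if v \<in> W - B then 1 else 0) :: int) = int (card (W - B))"
        using sum.inter_restrict[OF finite_W, of "\<lambda>_. 1 :: int" "W - B"] by (simp add: Int_absorb1)
      moreover have "0 < card (W - B)"
        using B finite_W by (simp add: card_gt_0_iff)
      ultimately have "(\<Sum>v\<in>W. c1 v) < (\<Sum>v\<in>W. c0 v)"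
        by (simp add: c1_def sum_subtractf)
      then show False
        using least[OF \<open>c1 \<in> Cs\<close>] by simp
    qed
  qed
  then show ?thesis
    using \<open>D' \<in> S\<close> by (auto simp: S_def)
qed

lemma lin_equiv_effective_or_orient_minus_effective:
  assumes "is_div W D"
  shows "(\<exists>E. effective W E \<and> lin_equiv W mm D E) \<or>
    (\<exists>\<pi> F. inj_on \<pi> W \<and> effective W F \<and> lin_equiv W mm (\<lambda>x. orient_div W mm \<pi> x - D x) F)"
proof -
  obtain q where q: "q \<in> W"
    using W_nonempty by blast
  obtain D' where D': "lin_equiv W mm D D'" "is_div W D'" and reduced: "q_reduced W mm q D'"
    using exists_lin_equiv_q_reduced[OF q assms] by blast
  show ?thesis
  proof (cases "0 \<le> D' q")
    case q_nonneg: True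
    have "0 \<le> D' v" for v
      using q_nonneg D'(2) reduced by (cases "v \<in> W - {q}") (auto simp: q_reduced_def is_div_def)
    then have "effective W D'"
      using D'(2) by (simp add: effective_def)
    then show ?thesis
      using D'(1) by blast
  next
    case q_neg: False
    have "\<exists>v\<in>W - B. D' v < (\<Sum>w\<in>B. int (mm v w))" if "q \<in> B" "B \<subseteq> W" "B \<noteq> W" for B
      using reduced that unfolding q_reduced_def by blast
    from exists_burning_order[OF q this] obtain \<pi> :: "'v \<Rightarrow> int"
      where \<pi>: "inj_on \<pi> W" and burnt: "\<forall>u\<in>W - {q}. D' u < (\<Sum>w\<in>{w\<in>W. \<pi> w < \<pi> u}. int (mm u w))"
      by blast
    define F where "F = (\<lambda>x. orient_div W mm \<pi> x - D' x)"
    have "0 \<le> F x" for x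
    proof (cases "x \<in> W")
      case True
      have F_x: "F x = (\<Sum>w\<in>{w\<in>W. \<pi> w < \<pi> x}. int (mm x w)) - 1 - D' x"
        using True by (simp add: F_def orient_div_def)
      show ?thesis
      proof (cases "x = q")
        case True
        have "0 \<le> (\<Sum>w\<in>{w\<in>W. \<pi> w < \<pi> x}. int (mm x w))"
          by (simp add: sum_nonneg)
        then show ?thesis
          using F_x True q_neg by simp
      next
        case False
        then show ?thesis
          using F_x burnt \<open>x \<in> W\<close> by simp
      qed
    next
      case False
      then show ?thesis
        using D'(2) by (simp add: F_def orient_div_def is_div_def)
    qed
    then have "effective W F"
      using D'(2) is_div_orient_div by (simp add: effective_def F_def is_div_def)
    moreover have "lin_equiv W mm (\<lambda>x. orient_div W mm \<pi> x - D x) F"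
      unfolding F_def by (rule lin_equiv_diff_left[OF lin_equiv_sym[OF D'(1)]])
    ultimately show ?thesis
      using \<pi> by blast
  qed
qed

end

definition deg_pos :: "'v set \<Rightarrow> ('v \<Rightarrow> int) \<Rightarrow> int" where
  "deg_pos V X = (\<Sum>v\<in>V. max (X v) 0)"

definition min_excess :: "'v set \<Rightarrow> ('v \<Rightarrow> 'v \<Rightarrow> nat) \<Rightarrow> ('v \<Rightarrow> int) \<Rightarrow> nat" where
  "min_excess V m D = (LEAST n. \<exists>D' (\<pi> :: 'v \<Rightarrow> int). lin_equiv V m D D' \<and> inj_on \<pi> V \<and>
     deg_pos V (\<lambda>x. D' x - orient_div V m \<pi> x) = int n)"

lemma deg_pos_nonneg: "0 \<le> deg_pos V X"
  unfolding deg_pos_def by (rule sum_nonneg) simp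

lemma deg_pos_uminus: "deg_pos V (\<lambda>x. - X x) = deg_pos V X - deg V X"
proof -
  have "deg_pos V (\<lambda>x. - X x) = (\<Sum>v\<in>V. max (X v) 0 - X v)"
    unfolding deg_pos_def by (intro sum.cong) (auto simp: max_def)
  then show ?thesis
    by (simp add: deg_pos_def deg_def sum_subtractf)
qed

lemma effective_deg_zero: "effective V E \<Longrightarrow> finite V \<Longrightarrow> deg V E = 0 \<Longrightarrow> E = (\<lambda>_. 0)"
  by (auto simp: deg_def effective_def is_div_def sum_nonneg_eq_0_iff fun_eq_iff)

context connected_multigraph
begin

lemma min_excess_attained:
  "\<exists>D' (\<pi> :: 'v \<Rightarrow> int). lin_equiv W mm D D' \<and> inj_on \<pi> W \<and>
     deg_pos W (\<lambda>x. D' x - orient_div W mm \<pi> x) = int (min_excess W mm D)"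
proof -
  obtain \<pi> :: "'v \<Rightarrow> int" where "inj_on \<pi> W"
    using finite_imp_inj_on_int[OF finite_W] by blast
  then have "\<exists>D' (\<pi>' :: 'v \<Rightarrow> int). lin_equiv W mm D D' \<and> inj_on \<pi>' W \<and>
     deg_pos W (\<lambda>x. D' x - orient_div W mm \<pi>' x) = int (nat (deg_pos W (\<lambda>x. D x - orient_div W mm \<pi> x)))"
    by (intro exI[of _ D] exI[of _ \<pi>]) (simp add: lin_equiv_refl deg_pos_nonneg)
  then show ?thesis
    unfolding min_excess_def by (rule LeastI)
qed

lemma min_excess_le:
  assumes "lin_equiv W mm D D'" "inj_on \<pi> W"
  shows "int (min_excess W mm D) \<le> deg_pos W (\<lambda>x. D' x - orient_div W mm \<pi> x)"
proof -
  have "min_excess W mm D \<le> nat (deg_pos W (\<lambda>x. D' x - orient_div W mm \<pi> x))"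
    unfolding min_excess_def by (rule Least_le) (use assms deg_pos_nonneg in auto)
  then show ?thesis
    using deg_pos_nonneg[of W "\<lambda>x. D' x - orient_div W mm \<pi> x"] by linarith
qed

lemma exists_effective_not_lin_equiv_effective_minus:
  assumes D: "is_div W D" and k: "min_excess W mm D \<le> k"
  shows "\<exists>E. effective W E \<and> deg W E = int k \<and> \<not> (\<exists>F. effective W F \<and> lin_equiv W mm (\<lambda>x. D x - E x) F)"
proof -
  obtain q where q: "q \<in> W"
    using W_nonempty by blast
  obtain D0 and \<pi> :: "'v \<Rightarrow> int" where D0: "lin_equiv W mm D D0" and \<pi>: "inj_on \<pi> W"
    and excess: "deg_pos W (\<lambda>x. D0 x - orient_div W mm \<pi> x) = int (min_excess W mm D)"
    using min_excess_attained by blast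
  have "is_div W D0"
    using lin_equiv_is_div[OF D0 D] .
  define E where "E = (\<lambda>x. max (D0 x - orient_div W mm \<pi> x) 0 + (if x = q then int k - int (min_excess W mm D) else 0))"
  have "effective W E"
    using \<open>is_div W D0\<close> q k by (auto simp: effective_def is_div_def E_def orient_div_def)
  moreover have "deg W E = int k"
    using excess q finite_W by (simp add: deg_def E_def deg_pos_def sum.distrib)
  moreover have "\<not> (\<exists>F. effective W F \<and> lin_equiv W mm (\<lambda>x. D x - E x) F)"
  proof
    assume "\<exists>F. effective W F \<and> lin_equiv W mm (\<lambda>x. D x - E x) F"
    then obtain F where F: "effective W F" "lin_equiv W mm (\<lambda>x. D0 x - E x) F"
      using lin_equiv_trans[OF lin_equiv_diff_right[OF lin_equiv_sym[OF D0]]] by blast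
    text \<open>Adding \<open>\<nu> - D0 + E \<ge> 0\<close> to \<open>F\<close> turns \<open>D0 - E ~ F\<close> into \<open>\<nu> ~\<close> an effective divisor.\<close>
    have "effective W (\<lambda>x. F x + (orient_div W mm \<pi> x - D0 x + E x))"
      using F(1) \<open>is_div W D0\<close> k q
      by (auto simp: effective_def is_div_def E_def orient_div_def max_def)
    moreover have "lin_equiv W mm (orient_div W mm \<pi>) (\<lambda>x. F x + (orient_div W mm \<pi> x - D0 x + E x))"
      using F(2) by (auto simp: lin_equiv_iff_prin_div algebra_simps)
    ultimately show False
      using orient_div_not_lin_equiv_effective by blast
  qed
  ultimately show ?thesis
    by blast
qed

lemma lin_equiv_effective_minus_if_deg_lt:
  assumes D: "is_div W D" and E: "effective W E" and deg_E: "deg W E < int (min_excess W mm D)"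
  shows "\<exists>F. effective W F \<and> lin_equiv W mm (\<lambda>x. D x - E x) F"
proof (rule ccontr)
  assume no: "\<not> ?thesis"
  have "is_div W (\<lambda>x. D x - E x)"
    using D E by (simp add: is_div_def effective_def)
  then obtain \<pi> F where \<pi>: "inj_on \<pi> W" and F: "effective W F"
    and equiv: "lin_equiv W mm (\<lambda>x. orient_div W mm \<pi> x - (D x - E x)) F"
    using lin_equiv_effective_or_orient_minus_effective no by blast
  obtain c where c: "\<And>x. orient_div W mm \<pi> x - (D x - E x) - F x = prin_div W mm c x"
    using equiv by (auto simp: lin_equiv_iff_prin_div)
  have "lin_equiv W mm D (\<lambda>x. orient_div W mm \<pi> x + E x - F x)"
    unfolding lin_equiv_iff_prin_div
    by (rule exI[of _ "\<lambda>x. - c x"]) (simp add: prin_div_uminus flip: c)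
  then have "int (min_excess W mm D) \<le> deg_pos W (\<lambda>x. (orient_div W mm \<pi> x + E x - F x) - orient_div W mm \<pi> x)"
    using \<pi> by (rule min_excess_le)
  also have "\<dots> \<le> deg W E"
    unfolding deg_pos_def deg_def by (rule sum_mono) (use E F in \<open>auto simp: effective_def\<close>)
  finally show False
    using deg_E by simp
qed

lemma rank_eq_min_excess:
  assumes D: "is_div W D"
  shows "rank W mm D = int (min_excess W mm D) - 1"
proof (cases "min_excess W mm D = 0")
  case True
  then obtain E where "effective W E" "deg W E = 0"
    and "\<not> (\<exists>F. effective W F \<and> lin_equiv W mm (\<lambda>x. D x - E x) F)"
    using exists_effective_not_lin_equiv_effective_minus[OF D, of 0] by auto
  moreover from this have "E = (\<lambda>_. 0)"
    using effective_deg_zero finite_W by blast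
  ultimately show ?thesis
    using True by (simp add: rank_def)
next
  case False
  let ?P = "\<lambda>k. \<forall>E. effective W E \<and> deg W E = int k \<longrightarrow> (\<exists>F. effective W F \<and> lin_equiv W mm (\<lambda>x. D x - E x) F)"
  have P_iff: "?P k \<longleftrightarrow> k < min_excess W mm D" for k
    using exists_effective_not_lin_equiv_effective_minus[OF D, of k]
      lin_equiv_effective_minus_if_deg_lt[OF D] by (metis not_less of_nat_less_iff)
  have "effective W (\<lambda>_. 0)" "deg W (\<lambda>_. 0) = int 0"
    by (simp_all add: effective_def is_div_def deg_def)
  moreover have "?P 0"
    using P_iff[of 0] False by simp
  ultimately obtain F where "effective W F" "lin_equiv W mm (\<lambda>x. D x - 0) F"
    by blast
  then have "\<exists>F. effective W F \<and> lin_equiv W mm D F"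
    by auto
  moreover have "(GREATEST k. ?P k) = min_excess W mm D - 1"
    unfolding P_iff using False by (intro Greatest_equality) auto
  ultimately show ?thesis
    using False by (simp add: rank_def)
qed

lemma rank_lin_equiv:
  assumes "lin_equiv W mm D D'"
  shows "rank W mm D = rank W mm D'"
proof -
  have "(\<exists>E. effective W E \<and> lin_equiv W mm D E) \<longleftrightarrow> (\<exists>E. effective W E \<and> lin_equiv W mm D' E)"
    using assms lin_equiv_trans lin_equiv_sym by blast
  moreover have "lin_equiv W mm (\<lambda>x. D x - E x) F \<longleftrightarrow> lin_equiv W mm (\<lambda>x. D' x - E x) F" for E F
    using lin_equiv_diff_right[OF assms] lin_equiv_diff_right[OF lin_equiv_sym[OF assms]]
      lin_equiv_trans by blast
  ultimately show ?thesis
    unfolding rank_def by simp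
qed

end

locale loopless_graph = connected_multigraph W mm for W :: "'v set" and mm +
  assumes no_loops: "\<And>v. mm v v = 0"
begin

lemma valency_eq_sum: "valency W mm v = (\<Sum>w\<in>W - {v}. mm v w)"
  by (simp add: valency_def no_loops)

lemma canon_div_minus_orient_div:
  assumes "inj_on \<pi> W"
  shows "canon_div W mm x - orient_div W mm \<pi> x = orient_div W mm (\<lambda>x. - \<pi> x) x"
proof (cases "x \<in> W")
  case True
  have "int (valency W mm x) =
      (\<Sum>w\<in>{w\<in>W. \<pi> w < \<pi> x}. int (mm x w)) + (\<Sum>w\<in>{w\<in>W. \<pi> x < \<pi> w}. int (mm x w))"
    using sum_remove_split_by_order[OF finite_W assms True, of "\<lambda>w. int (mm x w)"]
    by (simp add: valency_eq_sum)
  then show ?thesis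
    using True by (simp add: canon_div_def orient_div_def)
qed (simp add: canon_div_def orient_div_def)

lemma deg_orient_div:
  assumes "inj_on \<pi> W"
  shows "2 * deg W (orient_div W mm \<pi>) = deg W (canon_div W mm)"
proof -
  have "(\<Sum>v\<in>W. \<Sum>w\<in>{w\<in>W. \<pi> w < \<pi> v}. int (mm v w)) = (\<Sum>v\<in>W. \<Sum>w\<in>{w\<in>W. \<pi> v < \<pi> w}. int (mm v w))"
    by (rule sum_below_eq_sum_above[OF finite_W]) (simp add: mm_sym)
  then have "deg W (orient_div W mm \<pi>) = deg W (orient_div W mm (\<lambda>x. - \<pi> x))"
    by (simp add: deg_def orient_div_def sum_subtractf)
  moreover have "canon_div W mm = (\<lambda>x. orient_div W mm \<pi> x + orient_div W mm (\<lambda>x. - \<pi> x) x)"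
    using canon_div_minus_orient_div[OF assms] by (simp add: fun_eq_iff algebra_simps)
  ultimately show ?thesis
    by (simp add: deg_add)
qed

lemma min_excess_canon_minus_le:
  "2 * int (min_excess W mm (\<lambda>x. canon_div W mm x - D x)) + 2 * deg W D
     \<le> 2 * int (min_excess W mm D) + deg W (canon_div W mm)"
proof -
  obtain D' and \<pi> :: "'v \<Rightarrow> int" where D': "lin_equiv W mm D D'" and \<pi>: "inj_on \<pi> W"
    and excess: "deg_pos W (\<lambda>x. D' x - orient_div W mm \<pi> x) = int (min_excess W mm D)"
    using min_excess_attained by blast
  have "lin_equiv W mm (\<lambda>x. canon_div W mm x - D x) (\<lambda>x. canon_div W mm x - D' x)"
    using lin_equiv_diff_left[OF lin_equiv_sym[OF D']] .
  moreover have "inj_on (\<lambda>x. - \<pi> x) W"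
    using \<pi> by (auto simp: inj_on_def)
  ultimately have "int (min_excess W mm (\<lambda>x. canon_div W mm x - D x))
      \<le> deg_pos W (\<lambda>x. (canon_div W mm x - D' x) - orient_div W mm (\<lambda>x. - \<pi> x) x)"
    by (rule min_excess_le)
  also have "\<dots> = deg_pos W (\<lambda>x. - (D' x - orient_div W mm \<pi> x))"
    using canon_div_minus_orient_div[OF \<pi>] by (simp add: algebra_simps flip: canon_div_minus_orient_div[OF \<pi>])
  also have "\<dots> = int (min_excess W mm D) - (deg W D - deg W (orient_div W mm \<pi>))"
    using deg_pos_uminus[of W "\<lambda>x. D' x - orient_div W mm \<pi> x"] excess lin_equiv_deg[OF D']
      deg_diff[of D' "orient_div W mm \<pi>"] by simp
  finally show ?thesis
    using deg_orient_div[OF \<pi>] by linarith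
qed

theorem riemann_roch:
  assumes "is_div W D"
  shows "2 * (rank W mm D - rank W mm (\<lambda>x. canon_div W mm x - D x)) = 2 * deg W D - deg W (canon_div W mm)"
proof -
  have "is_div W (\<lambda>x. canon_div W mm x - D x)"
    using assms is_div_canon_div by (simp add: is_div_def)
  moreover have "2 * int (min_excess W mm D) + 2 * deg W (\<lambda>x. canon_div W mm x - D x)
      \<le> 2 * int (min_excess W mm (\<lambda>x. canon_div W mm x - D x)) + deg W (canon_div W mm)"
    using min_excess_canon_minus_le[of "\<lambda>x. canon_div W mm x - D x"] by simp
  ultimately show ?thesis
    using min_excess_canon_minus_le[of D] rank_eq_min_excess assms by (simp add: deg_diff)
qed

end

lemma hat_V_eq: "hat_V V M = Inl ` V \<union> Inr ` (SIGMA v:V. {..<M v v})"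
  by (auto simp: hat_V_def)

lemma finite_hat_V: "finite V \<Longrightarrow> finite (hat_V V M)"
  by (simp add: hat_V_eq)

lemma sum_hat_V:
  fixes f :: "'v + 'v \<times> nat \<Rightarrow> 'c::comm_monoid_add"
  assumes "finite V"
  shows "(\<Sum>x\<in>hat_V V M. f x) = (\<Sum>v\<in>V. f (Inl v)) + (\<Sum>v\<in>V. \<Sum>i<M v v. f (Inr (v, i)))"
proof -
  have "(\<Sum>x\<in>hat_V V M. f x) = (\<Sum>x\<in>Inl ` V. f x) + (\<Sum>x\<in>Inr ` (SIGMA v:V. {..<M v v}). f x)"
    unfolding hat_V_eq by (rule sum.union_disjoint) (use assms in auto)
  also have "(\<Sum>x\<in>Inl ` V. f x) = (\<Sum>v\<in>V. f (Inl v))"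
    by (rule sum.reindex_cong[where l = Inl]) (auto simp: inj_on_def)
  also have "(\<Sum>x\<in>Inr ` (SIGMA v:V. {..<M v v}). f x) = (\<Sum>p\<in>(SIGMA v:V. {..<M v v}). f (Inr p))"
    by (rule sum.reindex_cong[where l = Inr]) (auto simp: inj_on_def)
  also have "\<dots> = (\<Sum>v\<in>V. \<Sum>i<M v v. f (Inr (v, i)))"
    using sum.Sigma[OF assms, of "\<lambda>v. {..<M v v}" "\<lambda>v i. f (Inr (v, i))"] by (simp add: split_def)
  finally show ?thesis .
qed

lemma hat_m_simps [simp]:
  "hat_m M (Inl v) (Inl w) = (if v = w then 0 else M v w)"
  "hat_m M (Inl v) (Inr (w, i)) = (if v = w \<and> i < M v v then 2 else 0)"
  "hat_m M (Inr (w, i)) (Inl v) = (if v = w \<and> i < M v v then 2 else 0)"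
  "hat_m M (Inr p) (Inr p') = 0"
  by (simp_all add: hat_m_def split: prod.splits)

lemma hat_m_diag: "hat_m M x x = 0"
  by (cases x) auto

lemma ext_div_simps [simp]: "ext_div D (Inl v) = D v" "ext_div D (Inr p) = 0"
  by (simp_all add: ext_div_def)

lemma deg_ext_div: "finite V \<Longrightarrow> deg (hat_V V M) (ext_div D) = deg V D"
  unfolding deg_def by (simp add: sum_hat_V)

lemma is_div_ext_div: "is_div V D \<Longrightarrow> is_div (hat_V V M) (ext_div D)"
  unfolding is_div_def ext_div_def by (auto simp: hat_V_def split: sum.splits)

lemma multigraph_hat:
  assumes "multigraph V M"
  shows "multigraph (hat_V V M) (hat_m M)"
proof -
  have fin: "finite V" and ne: "V \<noteq> {}" and sym: "\<And>v w. M v w = M w v"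
    and supp: "\<And>v w. 0 < M v w \<Longrightarrow> v \<in> V \<and> w \<in> V"
    and conn: "\<And>v w. v \<in> V \<Longrightarrow> w \<in> V \<Longrightarrow> (v, w) \<in> {(x, y). 0 < M x y}\<^sup>*"
    using assms unfolding multigraph_def by blast+
  let ?R = "{(x, y). 0 < hat_m M x y}"
  have sym_hat: "hat_m M x y = hat_m M y x" for x y
    using sym by (cases x; cases y) (auto split: prod.splits)
  have supp_hat: "x \<in> hat_V V M \<and> y \<in> hat_V V M" if "0 < hat_m M x y" for x y
  proof -
    have "v \<in> V" if "i < M v v" for v i
      using supp[of v v] that by simp
    then show ?thesis
      using that supp by (cases x; cases y) (auto simp: hat_V_def split: if_splits)
  qed
  have conn_Inl: "(Inl v, Inl w) \<in> ?R\<^sup>*" if "(v, w) \<in> {(x, y). 0 < M x y}\<^sup>*" for v w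
    using that
  proof (induction rule: rtrancl_induct)
    case (step y z)
    then show ?case
      by (cases "y = z") (auto intro: rtrancl_into_rtrancl)
  qed simp
  have to_Inl: "\<exists>v\<in>V. (x, Inl v) \<in> ?R\<^sup>* \<and> (Inl v, x) \<in> ?R\<^sup>*" if "x \<in> hat_V V M" for x
    using that by (auto simp: hat_V_def intro!: r_into_rtrancl)
  have "(x, y) \<in> ?R\<^sup>*" if "x \<in> hat_V V M" "y \<in> hat_V V M" for x y
    using to_Inl[OF that(1)] to_Inl[OF that(2)] conn conn_Inl by (meson rtrancl_trans)
  moreover have "hat_V V M \<noteq> {}"
    using ne by (auto simp: hat_V_def)
  ultimately show ?thesis
    unfolding multigraph_def using finite_hat_V[OF fin] sym_hat supp_hat by blast
qed

lemma valency_hat_eq_sum: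
  assumes "finite V" "x \<in> hat_V V M"
  shows "valency (hat_V V M) (hat_m M) x = (\<Sum>y\<in>hat_V V M. hat_m M x y)"
  using sum.remove[OF finite_hat_V[OF assms(1)] assms(2), of "hat_m M x"]
  by (simp add: valency_def hat_m_diag)

lemma valency_hat_Inl:
  assumes "finite V" "v \<in> V"
  shows "valency (hat_V V M) (hat_m M) (Inl v) = valency V M v"
proof -
  have "Inl v \<in> hat_V V M"
    using assms(2) by (simp add: hat_V_def)
  then have "valency (hat_V V M) (hat_m M) (Inl v)
      = (\<Sum>w\<in>V. hat_m M (Inl v) (Inl w)) + (\<Sum>w\<in>V. \<Sum>i<M w w. hat_m M (Inl v) (Inr (w, i)))"
    by (simp add: valency_hat_eq_sum[OF assms(1)] sum_hat_V[OF assms(1)])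
  also have "(\<Sum>w\<in>V. hat_m M (Inl v) (Inl w)) = (\<Sum>w\<in>V - {v}. hat_m M (Inl v) (Inl w))"
    using sum.remove[OF assms, of "\<lambda>w. hat_m M (Inl v) (Inl w)"] by simp
  also have "\<dots> = (\<Sum>w\<in>V - {v}. M v w)"
    by (rule sum.cong) auto
  also have "(\<Sum>i<M w w. hat_m M (Inl v) (Inr (w, i))) = (if w = v then 2 * M v v else 0)" for w
    by (cases "w = v") simp_all
  then have "(\<Sum>w\<in>V. \<Sum>i<M w w. hat_m M (Inl v) (Inr (w, i))) = 2 * M v v"
    using assms by simp
  finally show ?thesis
    by (simp add: valency_def)
qed

lemma valency_hat_Inr:
  assumes "finite V" "v \<in> V" "i < M v v"
  shows "valency (hat_V V M) (hat_m M) (Inr (v, i)) = 2"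
proof -
  have "Inr (v, i) \<in> hat_V V M"
    using assms(2,3) by (simp add: hat_V_def)
  then have "valency (hat_V V M) (hat_m M) (Inr (v, i)) = (\<Sum>w\<in>V. if w = v then 2 else 0)"
    using assms(3) by (simp add: valency_hat_eq_sum[OF assms(1)] sum_hat_V[OF assms(1)] cong: conj_cong)
  then show ?thesis
    using assms(1,2) by simp
qed

lemma loopless_graph_hat:
  assumes "multigraph V M"
  shows "loopless_graph (hat_V V M) (hat_m M)"
  by unfold_locales (rule multigraph_hat[OF assms], rule hat_m_diag)

lemma canon_div_hat:
  assumes "finite V"
  shows "canon_div (hat_V V M) (hat_m M) = ext_div (canon_div V M)"
proof
  fix x
  show "canon_div (hat_V V M) (hat_m M) x = ext_div (canon_div V M) x"
  proof (cases x)
    case (Inl v)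
    then show ?thesis
      using assms valency_hat_Inl[OF assms, of v] by (auto simp: canon_div_def hat_V_def)
  next
    case (Inr p)
    then show ?thesis
      using assms valency_hat_Inr[OF assms] by (cases p) (auto simp: canon_div_def hat_V_def)
  qed
qed

text \<open>A firing vector \<open>c\<close> on \<open>V\<close> is extended to the subdivision by firing every new vertex
  together with its base vertex; the new vertices are then balanced, and the subdivided loops
  contribute nothing at the old ones.\<close>

lemma lin_equiv_ext_div:
  assumes mg: "multigraph V M" and equiv: "lin_equiv V M D D'"
  shows "lin_equiv (hat_V V M) (hat_m M) (ext_div D) (ext_div D')"
proof -
  have fin: "finite V" and sym: "\<And>v w. M v w = M w v"
    using mg by (auto simp: multigraph_def)
  interpret hat: connected_multigraph "hat_V V M" "hat_m M"
    by unfold_locales (rule multigraph_hat[OF mg])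
  obtain c where c: "\<And>x. D x - D' x = prin_div V M c x"
    using equiv by (auto simp: lin_equiv_iff_prin_div)
  define c' :: "'a + 'a \<times> nat \<Rightarrow> int" where "c' = (\<lambda>x. case x of Inl v \<Rightarrow> c v | Inr (v, i) \<Rightarrow> c v)"
  have "ext_div D y - ext_div D' y = prin_div (hat_V V M) (hat_m M) c' y" for y
  proof (cases "y \<in> hat_V V M")
    case False
    have "ext_div D y - ext_div D' y = 0"
      using False c prin_div_outside by (cases y) (auto simp: hat_V_def image_iff)
    then show ?thesis
      using prin_div_outside[OF False] by simp
  next
    case True
    then consider u where "y = Inl u" "u \<in> V" | u j where "y = Inr (u, j)" "u \<in> V" "j < M u u"
      by (auto simp: hat_V_def)
    then show ?thesis
    proof cases
      case 1
      have "prin_div (hat_V V M) (hat_m M) c' y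
          = (\<Sum>v\<in>V. int (hat_m M (Inl v) (Inl u)) * (c v - c u))
            + (\<Sum>v\<in>V. \<Sum>i<M v v. int (hat_m M (Inr (v, i)) (Inl u)) * (c v - c u))"
        using 1 True fin by (simp add: hat.prin_div_eq' sum_hat_V c'_def)
      also have "(\<Sum>v\<in>V. int (hat_m M (Inl v) (Inl u)) * (c v - c u)) = (\<Sum>v\<in>V. int (M v u) * (c v - c u))"
        by (rule sum.cong) auto
      also have "(\<Sum>v\<in>V. \<Sum>i<M v v. int (hat_m M (Inr (v, i)) (Inl u)) * (c v - c u)) = 0"
        by (auto intro!: sum.neutral)
      also have "(\<Sum>v\<in>V. int (M v u) * (c v - c u)) = D u - D' u"
        using 1 by (simp add: c prin_div_eq[OF fin sym])
      finally show ?thesis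
        using 1 by simp
    next
      case 2
      have "prin_div (hat_V V M) (hat_m M) c' y = (\<Sum>v\<in>V. int (hat_m M (Inl v) (Inr (u, j))) * (c v - c u))"
        using 2 True fin by (simp add: hat.prin_div_eq' sum_hat_V c'_def)
      also have "\<dots> = 0"
        by (auto intro!: sum.neutral)
      finally show ?thesis
        using 2 by simp
    qed
  qed
  then show ?thesis
    unfolding lin_equiv_iff_prin_div by blast
qed

lemma multigraph_virt_m:
  assumes "multigraph V m"
  shows "multigraph V (virt_m V m \<omega>)"
proof -
  have "{(x, y). 0 < m x y} \<subseteq> {(x, y). 0 < virt_m V m \<omega> x y}"
    by (auto simp: virt_m_def)
  then have "{(x, y). 0 < m x y}\<^sup>* \<subseteq> {(x, y). 0 < virt_m V m \<omega> x y}\<^sup>*"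
    by (rule rtrancl_mono)
  moreover have "v \<in> V \<and> w \<in> V" if "0 < virt_m V m \<omega> v w" for v w
  proof -
    have "0 < m v w \<or> (v = w \<and> v \<in> V)"
      using that by (auto simp: virt_m_def split: if_splits)
    then show ?thesis
      using assms by (auto simp: multigraph_def)
  qed
  moreover have "virt_m V m \<omega> v w = virt_m V m \<omega> w v" for v w
    using assms by (auto simp: multigraph_def virt_m_def)
  ultimately show ?thesis
    using assms unfolding multigraph_def by blast
qed

lemma valency_virt_m:
  assumes "v \<in> V"
  shows "valency V (virt_m V m \<omega>) v = (\<Sum>w\<in>V - {v}. m v w) + 2 * (m v v + \<omega> v)"
proof -
  have "(\<Sum>w\<in>V - {v}. virt_m V m \<omega> v w) = (\<Sum>w\<in>V - {v}. m v w)"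
    by (rule sum.cong) (auto simp: virt_m_def)
  then show ?thesis
    using assms by (simp add: valency_def virt_m_def)
qed

lemma wcanon_eq_canon_div: "wcanon V m \<omega> = canon_div V (virt_m V m \<omega>)"
  by (simp add: wcanon_def canon_div_def fun_eq_iff)

lemma prin_div_virt_m:
  assumes "finite V" "\<And>v w. m v w = m w v"
  shows "prin_div V (virt_m V m \<omega>) c = prin_div V m c"
proof
  fix w
  have sym': "virt_m V m \<omega> v w = virt_m V m \<omega> w v" for v w
    by (cases "v = w") (simp_all add: virt_m_def assms(2))
  show "prin_div V (virt_m V m \<omega>) c w = prin_div V m c w"
  proof (cases "w \<in> V")
    case True
    have "prin_div V (virt_m V m \<omega>) c w = (\<Sum>v\<in>V. int (virt_m V m \<omega> v w) * (c v - c w))"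
      by (rule prin_div_eq[OF assms(1) sym' True])
    also have "\<dots> = (\<Sum>v\<in>V. int (m v w) * (c v - c w))"
      by (rule sum.cong) (auto simp: virt_m_def)
    also have "\<dots> = prin_div V m c w"
      by (rule prin_div_eq[OF assms True, symmetric])
    finally show ?thesis .
  qed (simp add: prin_div_outside)
qed

lemma lin_equiv_virt_m:
  assumes "multigraph V m" "lin_equiv V m D D'"
  shows "lin_equiv V (virt_m V m \<omega>) D D'"
proof -
  have "finite V" "\<And>v w. m v w = m w v"
    using assms(1) by (auto simp: multigraph_def)
  then show ?thesis
    using assms(2) by (simp add: lin_equiv_iff_prin_div prin_div_virt_m)
qed

lemma deg_wcanon:
  assumes mg: "multigraph V m"
  shows "deg V (wcanon V m \<omega>) = 2 * wgenus V m \<omega> - 2"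
proof -
  have fin: "finite V" and sym: "\<And>v w. m v w = m w v"
    using mg by (auto simp: multigraph_def)
  obtain \<pi> :: "'a \<Rightarrow> int" where \<pi>: "inj_on \<pi> V"
    using finite_imp_inj_on_int[OF fin] by blast
  define Y where "Y = (\<Sum>v\<in>V. \<Sum>w\<in>{w\<in>V. \<pi> w < \<pi> v}. int (m v w))"
  have twice: "(\<Sum>v\<in>V. \<Sum>w\<in>V - {v}. int (m v w)) = 2 * Y"
    unfolding Y_def by (rule sum_off_diagonal_eq_twice_below[OF fin _ \<pi>]) (simp add: sym)
  then have half: "int ((\<Sum>v\<in>V. \<Sum>w\<in>V - {v}. m v w) div 2) = Y"
    by (simp add: zdiv_int)
  have "deg V (wcanon V m \<omega>)
      = (\<Sum>v\<in>V. (\<Sum>w\<in>V - {v}. int (m v w)) + 2 * int (m v v) + 2 * int (\<omega> v) - 2)"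
    unfolding deg_def wcanon_def by (rule sum.cong) (auto simp: valency_virt_m)
  also have "\<dots> = 2 * Y + 2 * (\<Sum>v\<in>V. int (m v v)) + 2 * (\<Sum>v\<in>V. int (\<omega> v)) - 2 * int (card V)"
    using twice by (simp add: sum.distrib sum_subtractf sum_distrib_left)
  also have "\<dots> = 2 * wgenus V m \<omega> - 2"
    using half by (simp add: wgenus_def betti1_def num_edges_def)
  finally show ?thesis .
qed

theorem theorem3p8:
  fixes V :: "'a set" and m :: "'a \<Rightarrow> 'a \<Rightarrow> nat" and \<omega> :: "'a \<Rightarrow> nat"
  assumes "multigraph V m"
  shows "(\<forall>D. is_div V D \<longrightarrow>
            wrank V m \<omega> D - wrank V m \<omega> (\<lambda>v. wcanon V m \<omega> v - D v)
              = deg V D - wgenus V m \<omega> + 1)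
       \<and> (\<forall>D D'. is_div V D \<and> is_div V D' \<and> lin_equiv V m D D' \<longrightarrow>
            wrank V m \<omega> D = wrank V m \<omega> D')"
proof -
  define M where "M = virt_m V m \<omega>"
  define H where "H = hat_V V M"
  have mg: "multigraph V M" and fin: "finite V"
    using multigraph_virt_m[OF assms] assms by (auto simp: M_def multigraph_def)
  interpret hat: loopless_graph H "hat_m M"
    unfolding H_def by (rule loopless_graph_hat[OF mg])
  have wrank_eq: "wrank V m \<omega> D = rank H (hat_m M) (ext_div D)" for D
    by (simp add: wrank_def rank_sharp_def H_def M_def)
  have canon: "canon_div H (hat_m M) = ext_div (wcanon V m \<omega>)"
    unfolding H_def M_def wcanon_eq_canon_div by (rule canon_div_hat[OF fin])
  have deg_canon: "deg H (canon_div H (hat_m M)) = 2 * wgenus V m \<omega> - 2"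
    unfolding canon using deg_ext_div[OF fin, of M] deg_wcanon[OF assms] by (simp add: H_def)
  have "wrank V m \<omega> D - wrank V m \<omega> (\<lambda>v. wcanon V m \<omega> v - D v) = deg V D - wgenus V m \<omega> + 1"
    if "is_div V D" for D
  proof -
    have "(\<lambda>x. canon_div H (hat_m M) x - ext_div D x) = ext_div (\<lambda>v. wcanon V m \<omega> v - D v)"
      by (simp add: canon fun_eq_iff ext_div_def split: sum.splits)
    then show ?thesis
      using hat.riemann_roch[OF is_div_ext_div[OF that, of M, folded H_def]] deg_canon
        deg_ext_div[OF fin, of M D] by (simp add: wrank_eq H_def)
  qed
  moreover have "wrank V m \<omega> D = wrank V m \<omega> D'" if "lin_equiv V m D D'" for D D'
    unfolding wrank_eq H_def M_def
    by (intro hat.rank_lin_equiv[unfolded H_def M_def] lin_equiv_ext_div[OF multigraph_virt_m]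
        lin_equiv_virt_m assms that)
  ultimately show ?thesis
    by blast
qed
end
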